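(* Let $(L,\sqsubseteq)$ be a countably complete lattice, $F:L\to L$ monotone and countably continuous, and $a\in L^\omega$ with $a_n\sqsubseteq a_{n+1}$ for all $n$. Define $c_m=\inf_{n\ge m}\sup_{k\ge n}F^k(a_k)$. Then $F(c_m)\sqsubseteq c_m$ for all $m\in\omega$.
   Context: A countably complete lattice is a lattice in which every countable subset (including $\emptyset$) has a supremum and an infimum. $F$ is countably continuous if $F(\sup S)=\sup F(S)$ for every nonempty countable $S\subseteq L$. $F^k$ is the $k$-fold iterate. *)

theory Defs
  imports "HOL-Library.Countable_Complete_Lattices"
begin

definition countably_continuous :: "('a::countable_complete_lattice \<Rightarrow> 'a) \<Rightarrow> bool" where
  "countably_continuous F \<longleftrightarrow>
     (\<forall>S. countable S \<and> S \<noteq> {} \<longrightarrow> F (Sup S) = Sup (F ` S))"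

end

theory Submission
  imports Defs
begin

text \<open>Every tail supremum \<open>s n = (SUP k\<ge>n. F\<^sup>k (a k))\<close> is a pre-fixed point of \<open>F\<close>:
  by continuity \<open>F (s n)\<close> is the supremum of the terms \<open>F\<^sup>k\<^sup>+\<^sup>1 (a k)\<close>, and each of these
  lies below the term \<open>F\<^sup>k\<^sup>+\<^sup>1 (a (k+1))\<close> of \<open>s n\<close> because \<open>a\<close> is increasing. Pre-fixed
  points of a monotone map are closed under countable infima, hence so is \<open>c m = (INF n\<ge>m. s n)\<close>.\<close>

lemma countably_continuous_SUP:
  fixes f :: "'b \<Rightarrow> 'a::countable_complete_lattice"
  assumes "countably_continuous F" and "countable A" and "A \<noteq> {}"
  shows "F (SUP x\<in>A. f x) = (SUP x\<in>A. F (f x))"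
proof -
  have "F (Sup (f ` A)) = Sup (F ` f ` A)"
    using assms unfolding countably_continuous_def by blast
  then show ?thesis by (simp add: image_image)
qed

lemma countably_continuous_tail_SUP_le:
  fixes x :: "nat \<Rightarrow> 'a::countable_complete_lattice"
  assumes "countably_continuous F" and step: "\<And>k. F (x k) \<le> x (Suc k)"
  shows "F (SUP k\<in>{n..}. x k) \<le> (SUP k\<in>{n..}. x k)"
proof -
  have "F (SUP k\<in>{n..}. x k) = (SUP k\<in>{n..}. F (x k))"
    using assms(1) by (rule countably_continuous_SUP) auto
  also have "\<dots> \<le> (SUP k\<in>{n..}. x k)"
  proof (rule ccSUP_least)
    fix k assume "k \<in> {n..}"
    then have "x (Suc k) \<le> (SUP k\<in>{n..}. x k)" by (intro ccSUP_upper) auto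
    with step show "F (x k) \<le> (SUP k\<in>{n..}. x k)" by (rule order_trans)
  qed simp
  finally show ?thesis .
qed

lemma mono_ccINF_le:
  fixes g :: "'b \<Rightarrow> 'a::countable_complete_lattice"
  assumes "mono F" and "countable A" and pre: "\<And>x. x \<in> A \<Longrightarrow> F (g x) \<le> g x"
  shows "F (INF x\<in>A. g x) \<le> (INF x\<in>A. g x)"
proof (rule ccINF_greatest)
  fix x assume "x \<in> A"
  then have "F (INF x\<in>A. g x) \<le> F (g x)"
    by (intro monoD[OF \<open>mono F\<close>] ccINF_lower \<open>countable A\<close>)
  also have "\<dots> \<le> g x" using pre \<open>x \<in> A\<close> .
  finally show "F (INF x\<in>A. g x) \<le> g x" .
qed fact

lemma funpow_Suc_mono:
  assumes "mono F" and "x \<le> y"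
  shows "F ((F ^^ k) x) \<le> (F ^^ Suc k) y"
proof -
  have "(F ^^ Suc k) x \<le> (F ^^ Suc k) y"
    using assms by (rule funpow_mono)
  then show ?thesis by simp
qed

theorem mainTheorem8:
  fixes F :: "'a::countable_complete_lattice \<Rightarrow> 'a"
    and a :: "nat \<Rightarrow> 'a"
    and c :: "nat \<Rightarrow> 'a"
  assumes "mono F"
    and "countably_continuous F"
    and "\<And>n. a n \<le> a (Suc n)"
    and "\<And>m. c m = (INF n\<in>{m..}. SUP k\<in>{n..}. (F ^^ k) (a k))"
  shows "\<forall>m. F (c m) \<le> c m"
proof
  fix m
  have tail: "F (SUP k\<in>{n..}. (F ^^ k) (a k)) \<le> (SUP k\<in>{n..}. (F ^^ k) (a k))" for n
    using assms(2) by (rule countably_continuous_tail_SUP_le) (intro funpow_Suc_mono assms(1,3))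
  have "F (INF n\<in>{m..}. SUP k\<in>{n..}. (F ^^ k) (a k)) \<le> (INF n\<in>{m..}. SUP k\<in>{n..}. (F ^^ k) (a k))"
    using assms(1) by (rule mono_ccINF_le) (simp_all add: tail)
  then show "F (c m) \<le> c m" by (simp only: assms(4))
qed

end
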